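(* Let $X$ be a Hausdorff hereditarily disconnected space. Then $\mathcal{K}(X)$ contains a connected set with more than one point if and only if there exist a closed subset $F\subset X$ and a compact subset $K\subsetneq F$ such that $K$ intersects every quasicomponent of $F$.
   Context: $\mathcal{K}(X)$ is the set of nonempty compact subsets of $X$ with the Vietoris topology (generated by $U^+=\{A: A\subset U\}$ and $U^-=\{A: A\cap U\neq\emptyset\}$ for $U$ open in $X$). A space is hereditarily disconnected if every nonempty connected subset is a singleton. The quasicomponent of a space $F$ at $p\in F$ is the intersection of all clopen subsets of $F$ containing $p$. *)

theory Defs
  imports "HOL-Analysis.Analysis"
begin

definition hyperspace_K :: "'a topology \<Rightarrow> 'a set set" where
  "hyperspace_K X = {A. A \<noteq> {} \<and> compactin X A}"

definition vietoris :: "'a topology \<Rightarrow> 'a set topology" where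
  "vietoris X = topology_generated_by
     ({{A \<in> hyperspace_K X. A \<subseteq> U} | U. openin X U} \<union>
      {{A \<in> hyperspace_K X. A \<inter> U \<noteq> {}} | U. openin X U})"

definition hereditarily_disconnected_space :: "'a topology \<Rightarrow> bool" where
  "hereditarily_disconnected_space X \<longleftrightarrow>
     (\<forall>S. S \<subseteq> topspace X \<and> S \<noteq> {} \<and> connectedin X S \<longrightarrow> (\<exists>x. S = {x}))"

end

theory Submission
  imports Defs
begin

text \<open>
  If K meets every quasicomponent of the closed set F, then every nonempty
  clopen subset of F meets K. The continuous map x \<mapsto> K \<union> {x} from F into the
  hyperspace is constant on K, so a disconnection of its image would pull back
  to two disjoint nonempty clopen subsets of F both meeting K; for p \<in> F - K
  the image contains K \<noteq> K \<union> {p}.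

  Conversely, let C be connected with A, B \<in> C and A \<nsubseteq> B; take F the closure
  of \<Union>C and K = B. A quasicomponent Q of F missing the compact set B would be
  separated from it by a clopen partition U, V of F with B \<subseteq> U and Q \<subseteq> V.
  The Vietoris open sets "contained in U" and "meets V" then force \<Union>C \<subseteq> U,
  whereas V meets the closure of \<Union>C.
\<close>

lemma topspace_vietoris: "topspace (vietoris X) = hyperspace_K X"
  by (auto simp: vietoris_def hyperspace_K_def dest: compactin_subset_topspace)

lemma openin_vietoris_upper:
  "openin X U \<Longrightarrow> openin (vietoris X) {A \<in> hyperspace_K X. A \<subseteq> U}"
  unfolding vietoris_def by (rule topology_generated_by_Basis) blast

lemma openin_vietoris_lower:
  "openin X U \<Longrightarrow> openin (vietoris X) {A \<in> hyperspace_K X. A \<inter> U \<noteq> {}}"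
  unfolding vietoris_def by (rule topology_generated_by_Basis) blast

lemma insert_in_hyperspace_K:
  "\<lbrakk>compactin X K; x \<in> topspace X\<rbrakk> \<Longrightarrow> insert x K \<in> hyperspace_K X"
proof -
  assume "compactin X K" "x \<in> topspace X"
  then have "compactin X ({x} \<union> K)"
    by (intro compactin_Un) auto
  then show ?thesis
    by (simp add: hyperspace_K_def)
qed

lemma continuous_map_vietoris_insert:
  assumes K: "compactin X K"
  shows "continuous_map X (vietoris X) (\<lambda>x. insert x K)"
  unfolding vietoris_def
proof (rule continuous_on_generated_topo)
  fix S
  assume "S \<in> {{A \<in> hyperspace_K X. A \<subseteq> U} | U. openin X U} \<union>
              {{A \<in> hyperspace_K X. A \<inter> U \<noteq> {}} | U. openin X U}"
  then obtain U where U: "openin X U"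
    and "S = {A \<in> hyperspace_K X. A \<subseteq> U} \<or> S = {A \<in> hyperspace_K X. A \<inter> U \<noteq> {}}"
    by blast
  then have "(\<lambda>x. insert x K) -` S \<inter> topspace X \<in>
               {{}, topspace X, U \<inter> topspace X}"
    using insert_in_hyperspace_K[OF K] by auto
  then show "openin X ((\<lambda>x. insert x K) -` S \<inter> topspace X)"
    using U by (auto simp: Int_absorb2 openin_subset)
next
  show "(\<lambda>x. insert x K) ` topspace X \<subseteq>
        \<Union> ({{A \<in> hyperspace_K X. A \<subseteq> U} | U. openin X U} \<union>
           {{A \<in> hyperspace_K X. A \<inter> U \<noteq> {}} | U. openin X U})"
    using insert_in_hyperspace_K[OF K] compactin_subset_topspace[OF K] by blast
qed

lemma clopen_meets_quasi_component_transversal: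
  assumes K: "\<forall>Q \<in> quasi_components_of Y. K \<inter> Q \<noteq> {}"
    and T: "closedin Y T" "openin Y T" "T \<noteq> {}"
  shows "K \<inter> T \<noteq> {}"
proof -
  obtain x where x: "x \<in> T"
    using T(3) by blast
  then have x_Y: "x \<in> topspace Y"
    using T(2) openin_subset by blast
  define Q where "Q = quasi_component_of_set Y x"
  have Q: "Q \<in> quasi_components_of Y"
    using x_Y by (simp add: Q_def quasi_components_of_def)
  have "x \<in> Q"
    using x_Y by (simp add: Q_def)
  then have "Q \<subseteq> T"
    using quasi_component_of_clopen_cases[OF Q T(1,2)] x by (auto simp: disjnt_iff)
  with K Q show ?thesis
    by blast
qed

lemma connectedin_image_constant_on_quasi_transversal:
  assumes f: "continuous_map Y Z f"
    and const: "\<And>x. x \<in> K \<Longrightarrow> f x = c"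
    and K: "\<forall>Q \<in> quasi_components_of Y. K \<inter> Q \<noteq> {}"
  shows "connectedin Z (f ` topspace Y)"
  unfolding connectedin
proof (intro conjI notI)
  show "f ` topspace Y \<subseteq> topspace Z"
    using f by (rule continuous_map_image_subset_topspace)
next
  assume "\<exists>E1 E2. openin Z E1 \<and> openin Z E2 \<and> f ` topspace Y \<subseteq> E1 \<union> E2 \<and>
             E1 \<inter> E2 \<inter> f ` topspace Y = {} \<and> E1 \<inter> f ` topspace Y \<noteq> {} \<and>
             E2 \<inter> f ` topspace Y \<noteq> {}"
  then obtain E1 E2 where E: "openin Z E1" "openin Z E2"
    and cover: "f ` topspace Y \<subseteq> E1 \<union> E2"
    and disj: "E1 \<inter> E2 \<inter> f ` topspace Y = {}"
    and ne: "E1 \<inter> f ` topspace Y \<noteq> {}" "E2 \<inter> f ` topspace Y \<noteq> {}"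
    by blast
  define P1 where "P1 = {x \<in> topspace Y. f x \<in> E1}"
  define P2 where "P2 = {x \<in> topspace Y. f x \<in> E2}"
  have open12: "openin Y P1" "openin Y P2"
    unfolding P1_def P2_def using E f by (auto intro: openin_continuous_map_preimage)
  have "P1 = topspace Y - P2" "P2 = topspace Y - P1"
    using cover disj unfolding P1_def P2_def by blast+
  then have closed12: "closedin Y P1" "closedin Y P2"
    using open12 by (metis closedin_diff closedin_topspace)+
  have "P1 \<noteq> {}" "P2 \<noteq> {}"
    using ne unfolding P1_def P2_def by blast+
  then obtain k1 k2 where "k1 \<in> K" "k1 \<in> P1" "k2 \<in> K" "k2 \<in> P2"
    using clopen_meets_quasi_component_transversal[OF K closed12(1) open12(1)]
      clopen_meets_quasi_component_transversal[OF K closed12(2) open12(2)] by blast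
  then have "c \<in> E1" "c \<in> E2" "c \<in> f ` topspace Y"
    using const unfolding P1_def P2_def by force+
  with disj show False
    by blast
qed

lemma connectedin_vietoris_Union_subset_clopen:
  assumes C: "connectedin (vietoris X) C" and C_S: "\<Union>C \<subseteq> S"
    and U: "openin (subtopology X S) U" and V: "openin (subtopology X S) V"
    and UV: "U \<union> V = topspace (subtopology X S)" "disjnt U V"
    and B: "B \<in> C" "B \<subseteq> U"
  shows "\<Union>C \<subseteq> U"
proof (rule ccontr)
  assume "\<not> \<Union>C \<subseteq> U"
  then obtain D0 y where D0: "D0 \<in> C" "y \<in> D0" "y \<notin> U"
    by blast
  have C_K: "C \<subseteq> hyperspace_K X"
    using C connectedin_subset_topspace topspace_vietoris by blast
  then have C_UV: "D \<subseteq> U \<union> V" if "D \<in> C" for D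
    using that C_S UV(1) by (auto simp: hyperspace_K_def dest: compactin_subset_topspace)
  obtain Uo Vo where Uo: "openin X Uo" "U = Uo \<inter> S" and Vo: "openin X Vo" "V = Vo \<inter> S"
    using U V by (auto simp: openin_subtopology)
  define E1 where "E1 = {A \<in> hyperspace_K X. A \<inter> Vo \<noteq> {}}"
  define E2 where "E2 = {A \<in> hyperspace_K X. A \<subseteq> Uo}"
  have open_E1: "openin (vietoris X) E1"
    unfolding E1_def using Vo(1) by (rule openin_vietoris_lower)
  have open_E2: "openin (vietoris X) E2"
    unfolding E2_def using Uo(1) by (rule openin_vietoris_upper)
  have "C \<subseteq> E1 \<union> E2"
  proof
    fix D
    assume D: "D \<in> C"
    show "D \<in> E1 \<union> E2"
    proof (cases "D \<subseteq> Uo")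
      case False
      then have "D \<inter> Vo \<noteq> {}"
        using C_UV[OF D] Uo(2) Vo(2) by blast
      then show ?thesis
        using D C_K unfolding E1_def by blast
    qed (use D C_K in \<open>auto simp: E2_def\<close>)
  qed
  moreover have "E1 \<inter> E2 \<inter> C = {}"
  proof -
    have "D \<inter> Vo = {}" if "D \<in> C" "D \<subseteq> Uo" for D
      using that C_S UV(2) Uo(2) Vo(2) by (auto simp: disjnt_def)
    then show ?thesis
      unfolding E1_def E2_def by blast
  qed
  moreover have "E1 \<inter> C \<noteq> {}"
    using D0 C_UV[OF D0(1)] C_K Vo(2) unfolding E1_def by blast
  moreover have "E2 \<inter> C \<noteq> {}"
    using B C_K Uo(2) unfolding E2_def by blast
  ultimately show False
    by (rule connectedinD[OF C open_E1 open_E2])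
qed

lemma connectedin_vietoris_member_meets_quasi_components:
  assumes C: "connectedin (vietoris X) C" and B: "B \<in> C"
    and Q: "Q \<in> quasi_components_of (subtopology X (X closure_of \<Union>C))"
  shows "B \<inter> Q \<noteq> {}"
proof
  assume BQ: "B \<inter> Q = {}"
  define F where "F = X closure_of \<Union>C"
  have C_K: "C \<subseteq> hyperspace_K X"
    using C connectedin_subset_topspace topspace_vietoris by blast
  have C_F: "\<Union>C \<subseteq> F"
    unfolding F_def using C_K
    by (intro closure_of_subset) (auto simp: hyperspace_K_def dest: compactin_subset_topspace)
  have "compactin (subtopology X F) B"
    using B C_K C_F by (auto simp: compactin_subtopology hyperspace_K_def)
  then have "separated_between (subtopology X F) B Q"
    using Q BQ by (simp add: F_def separated_between_compact_quasi_component disjnt_def)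
  then obtain U V where U: "openin (subtopology X F) U" and V: "openin (subtopology X F) V"
    and UV: "U \<union> V = topspace (subtopology X F)" "disjnt U V" and "B \<subseteq> U" "Q \<subseteq> V"
    unfolding separated_between_def by blast
  then have C_U: "\<Union>C \<subseteq> U"
    using connectedin_vietoris_Union_subset_clopen[OF C C_F U V UV B] by blast
  obtain Vo where Vo: "openin X Vo" "V = Vo \<inter> F"
    using V by (auto simp: openin_subtopology)
  obtain q where "q \<in> Q"
    using Q nonempty_quasi_components_of by blast
  then have "q \<in> X closure_of \<Union>C" "q \<in> Vo"
    using \<open>Q \<subseteq> V\<close> Vo(2) unfolding F_def by blast+
  then obtain y where "y \<in> \<Union>C" "y \<in> Vo"
    using Vo(1) unfolding in_closure_of by blast
  then show False
    using C_U C_F UV(2) Vo(2) by (auto simp: disjnt_def)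
qed

theorem proposition7p1:
  fixes X :: "'a topology"
  assumes "Hausdorff_space X"
    and "hereditarily_disconnected_space X"
  shows "(\<exists>C. connectedin (vietoris X) C \<and> (\<exists>A B. A \<in> C \<and> B \<in> C \<and> A \<noteq> B))
     \<longleftrightarrow> (\<exists>F K. closedin X F \<and> compactin X K \<and> K \<subset> F \<and>
            (\<forall>Q \<in> quasi_components_of (subtopology X F). K \<inter> Q \<noteq> {}))"
proof
  assume "\<exists>C. connectedin (vietoris X) C \<and> (\<exists>A B. A \<in> C \<and> B \<in> C \<and> A \<noteq> B)"
  then obtain C A B where C: "connectedin (vietoris X) C" and AB: "A \<in> C" "B \<in> C" "\<not> A \<subseteq> B"
    by (metis subset_antisym)
  have C_K: "C \<subseteq> hyperspace_K X"
    using C connectedin_subset_topspace topspace_vietoris by blast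
  then have "\<Union>C \<subseteq> X closure_of \<Union>C"
    by (intro closure_of_subset) (auto simp: hyperspace_K_def dest: compactin_subset_topspace)
  then have "B \<subset> X closure_of \<Union>C"
    using AB by blast
  moreover have "compactin X B"
    using C_K AB(2) by (auto simp: hyperspace_K_def)
  ultimately show "\<exists>F K. closedin X F \<and> compactin X K \<and> K \<subset> F \<and>
                  (\<forall>Q \<in> quasi_components_of (subtopology X F). K \<inter> Q \<noteq> {})"
    using connectedin_vietoris_member_meets_quasi_components[OF C AB(2)] closedin_closure_of
    by blast
next
  assume "\<exists>F K. closedin X F \<and> compactin X K \<and> K \<subset> F \<and>
            (\<forall>Q \<in> quasi_components_of (subtopology X F). K \<inter> Q \<noteq> {})"
  then obtain F K where F: "closedin X F" and K: "compactin X K" "K \<subset> F"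
    and QK: "\<forall>Q \<in> quasi_components_of (subtopology X F). K \<inter> Q \<noteq> {}"
    by blast
  obtain p where p: "p \<in> F" "p \<notin> K"
    using K(2) by blast
  have top_F: "topspace (subtopology X F) = F"
    using F closedin_subset by auto
  have "connectedin (vietoris X) ((\<lambda>x. insert x K) ` F)"
    using connectedin_image_constant_on_quasi_transversal[OF _ _ QK, of "vietoris X" _ K]
      continuous_map_from_subtopology[OF continuous_map_vietoris_insert[OF K(1)]]
    by (metis top_F insert_absorb)
  moreover obtain k where "k \<in> K"
    using QK p(1) top_F by (auto simp: quasi_components_of_def)
  ultimately show "\<exists>C. connectedin (vietoris X) C \<and> (\<exists>A B. A \<in> C \<and> B \<in> C \<and> A \<noteq> B)"
    using p K(2) by (metis image_eqI insert_absorb insert_iff psubsetD)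
qed

end
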